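(* For every $\lambda\in\mathcal P_\epsilon(N)$, $$z(\lambda)=\max|\mathbf i|,$$ the maximum taken over all admissible sequences $\mathbf i$ for $\lambda$ (here $|\mathbf i|$ is the length of $\mathbf i$).
   Context: $\mathcal P_\epsilon(N)$ ($\epsilon=\pm1$) is the set of partitions $\lambda=(\lambda_1\ge\dots\ge\lambda_n\ge1)$ of $N$ in which every part $m$ with $\epsilon(-1)^m=1$ occurs with even multiplicity; conventions $\lambda_0=0$, $\lambda_i=0$ for $i>n$. $s(\lambda)=\sum_{i=1}^n\lfloor(\lambda_i-\lambda_{i+1})/2\rfloor$. A 2-step of $\lambda$ is a pair $(i,i+1)$, $1\le i<n$, with $\epsilon(-1)^{\lambda_i}=\epsilon(-1)^{\lambda_{i+1}}=-1$, $\lambda_{i-1}\ne\lambda_i$, $\lambda_{i+1}\ne\lambda_{i+2}$; $\Delta(\lambda)$ is the set of 2-steps. A 2-step $(i,i+1)$ is bad if ($i>1$ and $\lambda_{i-1}-\lambda_i$ is even) or $\lambda_{i+1}-\lambda_{i+2}$ is even, good otherwise; $\Delta_{\rm bad}(\lambda)$ is the set of bad 2-steps. A 2-cluster is a sequence $i_1<\dots<i_k$ with $k\ge2$, $(i_j,i_j+1)\in\Delta(\lambda)$ for all $j$ and $i_{j+1}=i_j+2$; it has a bad boundary if ($i_1>1$ and $\lambda_{i_1-1}-\lambda_{i_1}$ is a positive even integer) or $\lambda_{i_k+1}-\lambda_{i_k+2}$ is a positive even integer; a good 2-cluster is one without bad boundary, and $\Sigma(\lambda)$ is the set of good 2-clusters.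 Define $z(\lambda)=s(\lambda)+|\Delta(\lambda)|-|\Delta_{\rm bad}(\lambda)|+|\Sigma(\lambda)|$. KS algorithm: for $1\le i\le n$, Case 1 occurs at $i$ if $\lambda_i\ge\lambda_{i+1}+2$, and then $\lambda^{(i)}=(\lambda_1-2,\dots,\lambda_i-2,\lambda_{i+1},\dots,\lambda_n)$; Case 2 occurs at $i$ if $(i,i+1)\in\Delta(\lambda)$ and $\lambda_i=\lambda_{i+1}$, and then $\lambda^{(i)}=(\lambda_1-2,\dots,\lambda_{i-1}-2,\lambda_i-1,\lambda_{i+1}-1,\lambda_{i+2},\dots,\lambda_n)$; zero parts discarded, $\lambda^{(i)}\in\mathcal P_\epsilon(N-2i)$. A sequence $(i_1,\dots,i_l)$ is admissible for $\lambda$ if for each $k$ Case 1 or Case 2 occurs at $i_k$ for $\lambda^{(i_1,\dots,i_{k-1})}$, where $\lambda^\emptyset=\lambda$ and $\lambda^{(i_1,\dots,i_k)}=(\lambda^{(i_1,\dots,i_{k-1})})^{(i_k)}$. *)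

theory Defs
  imports Main
begin

text \<open>A partition is a list of its parts in weakly decreasing order, all parts positive.
  Parts are indexed from 1; lam xs 0 = 0 and lam xs i = 0 for i > length xs.\<close>

definition lam :: "nat list \<Rightarrow> nat \<Rightarrow> nat" where
  "lam xs i = (if 1 \<le> i \<and> i \<le> length xs then xs ! (i - 1) else 0)"

definition P_eps :: "int \<Rightarrow> nat \<Rightarrow> nat list set" where
  "P_eps eps N = {xs. sorted_wrt (\<ge>) xs \<and> (\<forall>x\<in>set xs. 0 < x) \<and> sum_list xs = N \<and>
      (\<forall>m\<in>set xs. eps * (-1) ^ m = 1 \<longrightarrow> even (count_list xs m))}"

definition s_fun :: "nat list \<Rightarrow> int" where
  "s_fun xs = (\<Sum>i=1..length xs. (int (lam xs i) - int (lam xs (i+1))) div 2)"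

definition two_steps :: "int \<Rightarrow> nat list \<Rightarrow> (nat \<times> nat) set" where
  "two_steps eps xs = {(i, i+1) | i. 1 \<le> i \<and> i < length xs \<and>
      eps * (-1) ^ lam xs i = -1 \<and> eps * (-1) ^ lam xs (i+1) = -1 \<and>
      lam xs (i-1) \<noteq> lam xs i \<and> lam xs (i+1) \<noteq> lam xs (i+2)}"

definition bad_two_steps :: "int \<Rightarrow> nat list \<Rightarrow> (nat \<times> nat) set" where
  "bad_two_steps eps xs = {(i, j) \<in> two_steps eps xs.
      (i > 1 \<and> even (int (lam xs (i-1)) - int (lam xs i))) \<or>
      even (int (lam xs (i+1)) - int (lam xs (i+2)))}"

definition two_cluster :: "int \<Rightarrow> nat list \<Rightarrow> nat list \<Rightarrow> bool" where
  "two_cluster eps xs cs \<longleftrightarrow> 2 \<le> length cs \<and>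
      (\<forall>j<length cs. (cs ! j, cs ! j + 1) \<in> two_steps eps xs) \<and>
      (\<forall>j. j + 1 < length cs \<longrightarrow> cs ! (j+1) = cs ! j + 2)"

definition pos_even :: "int \<Rightarrow> bool" where
  "pos_even d \<longleftrightarrow> 0 < d \<and> even d"

definition bad_boundary :: "nat list \<Rightarrow> nat list \<Rightarrow> bool" where
  "bad_boundary xs cs \<longleftrightarrow>
     (hd cs > 1 \<and> pos_even (int (lam xs (hd cs - 1)) - int (lam xs (hd cs)))) \<or>
     pos_even (int (lam xs (last cs + 1)) - int (lam xs (last cs + 2)))"

definition good_clusters :: "int \<Rightarrow> nat list \<Rightarrow> nat list set" where
  "good_clusters eps xs = {cs. two_cluster eps xs cs \<and> \<not> bad_boundary xs cs}"

definition z_fun :: "int \<Rightarrow> nat list \<Rightarrow> int" where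
  "z_fun eps xs = s_fun xs + int (card (two_steps eps xs)) - int (card (bad_two_steps eps xs))
                  + int (card (good_clusters eps xs))"

definition case1 :: "nat list \<Rightarrow> nat \<Rightarrow> bool" where
  "case1 xs i \<longleftrightarrow> 1 \<le> i \<and> i \<le> length xs \<and> lam xs (i+1) + 2 \<le> lam xs i"

definition case2 :: "int \<Rightarrow> nat list \<Rightarrow> nat \<Rightarrow> bool" where
  "case2 eps xs i \<longleftrightarrow> 1 \<le> i \<and> i \<le> length xs \<and>
      (i, i+1) \<in> two_steps eps xs \<and> lam xs i = lam xs (i+1)"

definition ks_step :: "int \<Rightarrow> nat list \<Rightarrow> nat \<Rightarrow> nat list" where
  "ks_step eps xs i =
     (if case1 xs i then
        filter (\<lambda>x. 0 < x) (map (\<lambda>j. if j \<le> i then lam xs j - 2 else lam xs j) [1..<length xs + 1])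
      else if case2 eps xs i then
        filter (\<lambda>x. 0 < x) (map (\<lambda>j. if j < i then lam xs j - 2
                                   else if j = i \<or> j = i + 1 then lam xs j - 1
                                   else lam xs j) [1..<length xs + 1])
      else xs)"

fun admissible :: "int \<Rightarrow> nat list \<Rightarrow> nat list \<Rightarrow> bool" where
  "admissible eps xs [] = True"
| "admissible eps xs (i # is) =
     ((case1 xs i \<or> case2 eps xs i) \<and> admissible eps (ks_step eps xs i) is)"

end

theory Submission
  imports Defs
begin

text \<open>Write a partition as its part function L and call a a good run end if a ends a run
  a, a-2, a-4, ... of 2-steps that starts at 1 or right after an odd gap and is followed by an
  odd gap L a - L (a+1). Consecutive 2-steps of a run are separated by even positive gaps, so the
  good 2-steps are exactly the good run ends not preceded by a 2-step at a-2, and a good 2-cluster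
  is the run ending at a good run end preceded by one; hence z is the sum of the halved gaps plus
  the number of good run ends. A Case 1 step lowers one gap by 2 and creates no good run end.
  A Case 2 step at i destroys the run end at i and lowers the gaps at i-1 and i+1 by 1; a good
  run end can only appear at i-2 or beyond i+2 when the corresponding gap was even, and so was
  paid for by a lost half-gap. Hence every step lowers z by at least 1, by exactly 1 at the least
  index where a case applies, and z = 0 when no case applies.\<close>

lemma sum_indicator_card: "finite A \<Longrightarrow> (\<Sum>a\<in>A. if P a then 1 else 0::int) = int (card {a\<in>A. P a})"
  by (simp add: sum.inter_filter[symmetric])

lemma sum_indicator_le_indicator:
  assumes "finite A" and "\<And>a b. a \<in> A \<Longrightarrow> b \<in> A \<Longrightarrow> P a \<Longrightarrow> P b \<Longrightarrow> a = b"
    and "\<And>a. a \<in> A \<Longrightarrow> P a \<Longrightarrow> Q"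
  shows "(\<Sum>a\<in>A. if P a then 1 else 0::int) \<le> (if Q then 1 else 0)"
proof (cases Q)
  case True
  have "card {a\<in>A. P a} \<le> Suc 0" using assms(1,2) by (subst card_le_Suc0_iff_eq) auto
  then show ?thesis using sum_indicator_card[OF assms(1), of P] True by simp
next
  case False
  then have "(\<Sum>a\<in>A. if P a then 1 else 0::int) = 0" using assms(3) by (intro sum.neutral) auto
  then show ?thesis by simp
qed

lemma minus_1_div_2: "((d::int) - 1) div 2 = d div 2 - (if even d then 1 else 0)"
  by (cases "even d") (auto elim!: evenE oddE)

section \<open>Two-steps and runs of two-steps\<close>

text \<open>Parts m with eps * (-1)^m = -1 are those not forced to occur with even multiplicity;
  both parts of a 2-step are of this kind.\<close>

definition free_parity :: "int \<Rightarrow> nat \<Rightarrow> bool" where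
  "free_parity e m \<longleftrightarrow> e * (-1) ^ m = -1"

lemma free_parity_even_diff: "free_parity e a \<Longrightarrow> free_parity e b \<Longrightarrow> even (int a - int b)"
  unfolding free_parity_def by (auto simp: minus_one_power_iff split: if_splits)

lemma free_parity_minus_2: "2 \<le> m \<Longrightarrow> free_parity e (m - 2) = free_parity e m"
  unfolding free_parity_def by (auto simp: minus_one_power_iff)

lemma free_parity_minus_1: "1 \<le> m \<Longrightarrow> free_parity e m \<Longrightarrow> \<not> free_parity e (m - 1)"
  unfolding free_parity_def by (auto simp: minus_one_power_iff split: if_splits)

text \<open>A partition is handled through its part function L, with L j the j-th part, L 0 = 0 and
  L j = 0 beyond the length; the condition 0 < L (i+1) replaces i < n.\<close>

definition two_step :: "int \<Rightarrow> (nat \<Rightarrow> nat) \<Rightarrow> nat \<Rightarrow> bool" where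
  "two_step e L i \<longleftrightarrow> 1 \<le> i \<and> 0 < L (i+1) \<and> free_parity e (L i) \<and> free_parity e (L (i+1)) \<and>
     L (i-1) \<noteq> L i \<and> L (i+1) \<noteq> L (i+2)"

definition gap :: "(nat \<Rightarrow> nat) \<Rightarrow> nat \<Rightarrow> int" where
  "gap L k = int (L k) - int (L (k+1))"

text \<open>The recursion says: a is a 2-step and the run of 2-steps a, a-2, a-4, ... ending at a has no
  bad left boundary, i.e. it starts at 1 or right after an odd gap.\<close>

fun left_good :: "int \<Rightarrow> (nat \<Rightarrow> nat) \<Rightarrow> nat \<Rightarrow> bool" where
  "left_good e L 0 = False"
| "left_good e L (Suc 0) = two_step e L 1"
| "left_good e L (Suc (Suc k)) = (two_step e L (k+2) \<and> (odd (gap L (k+1)) \<or> left_good e L k))"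

definition good_end :: "int \<Rightarrow> (nat \<Rightarrow> nat) \<Rightarrow> nat \<Rightarrow> bool" where
  "good_end e L a \<longleftrightarrow> left_good e L a \<and> odd (gap L (a+1))"

definition two_step_run :: "int \<Rightarrow> (nat \<Rightarrow> nat) \<Rightarrow> nat \<Rightarrow> nat \<Rightarrow> bool" where
  "two_step_run e L b a \<longleftrightarrow> (\<exists>m. a = b + 2 * m \<and> (\<forall>k\<le>m. two_step e L (b + 2 * k)))"

lemma two_step_ge1: "two_step e L a \<Longrightarrow> 1 \<le> a"
  by (simp add: two_step_def)

lemma left_good_two_step: "left_good e L a \<Longrightarrow> two_step e L a"
  by (induction e L a rule: left_good.induct) auto

lemma left_good_iff:
  "1 \<le> a \<Longrightarrow> left_good e L a \<longleftrightarrow> two_step e L a \<and> (a = 1 \<or> odd (gap L (a-1)) \<or> left_good e L (a-2))"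
proof (induction e L a rule: left_good.induct)
  case (3 e L k)
  then show ?case by (auto simp: add.commute)
qed simp_all

lemma even_gap_between_two_steps: "two_step e L j \<Longrightarrow> two_step e L (j+2) \<Longrightarrow> even (gap L (j+1))"
  unfolding two_step_def gap_def using free_parity_even_diff[of e "L (j+1)" "L (j+2)"]
  by (simp add: add.commute numeral_2_eq_2)

lemma even_gap_before_two_step: "two_step e L (a - 2) \<Longrightarrow> two_step e L a \<Longrightarrow> even (gap L (a - 1))"
proof -
  assume D: "two_step e L (a - 2)" "two_step e L a"
  then have "a - 2 + 2 = a" "a - 2 + 1 = a - 1" using two_step_ge1[OF D(1)] by auto
  then show ?thesis using D even_gap_between_two_steps[of e L "a - 2"] by simp
qed

lemma run_le: "two_step_run e L b a \<Longrightarrow> b \<le> a"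
  unfolding two_step_run_def by auto

lemma run_ends_two_step: "two_step_run e L b a \<Longrightarrow> two_step e L b \<and> two_step e L a"
  unfolding two_step_run_def by (auto dest: spec[of _ 0])

lemma run_refl: "two_step e L a \<Longrightarrow> two_step_run e L a a"
  unfolding two_step_run_def by auto

lemma run_extend: "two_step_run e L b a \<Longrightarrow> two_step e L (a+2) \<Longrightarrow> two_step_run e L b (a+2)"
  unfolding two_step_run_def
proof (elim exE conjE)
  fix m assume a: "a = b + 2 * m" and R: "\<forall>k\<le>m. two_step e L (b + 2 * k)" and D: "two_step e L (a+2)"
  have "\<forall>k\<le>Suc m. two_step e L (b + 2 * k)"
    using R D a by (auto simp: le_Suc_eq)
  then show "\<exists>m. a + 2 = b + 2 * m \<and> (\<forall>k\<le>m. two_step e L (b + 2 * k))"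
    using a by (intro exI[of _ "Suc m"]) auto
qed

lemma run_prepend: "two_step e L b \<Longrightarrow> two_step_run e L (b+2) a \<Longrightarrow> two_step_run e L b a"
  unfolding two_step_run_def
proof (elim exE conjE)
  fix m assume D: "two_step e L b" and a: "a = b + 2 + 2 * m" and R: "\<forall>k\<le>m. two_step e L (b + 2 + 2 * k)"
  have "two_step e L (b + 2 * k)" if "k \<le> Suc m" for k
    using D R[rule_format, of "k - 1"] that by (cases k) (auto simp: algebra_simps)
  then show "\<exists>m. a = b + 2 * m \<and> (\<forall>k\<le>m. two_step e L (b + 2 * k))"
    using a by (intro exI[of _ "Suc m"]) auto
qed

lemma run_drop_first: "two_step_run e L b a \<Longrightarrow> b < a \<Longrightarrow> two_step_run e L (b+2) a"
  unfolding two_step_run_def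
proof (elim exE conjE)
  fix m assume a: "a = b + 2 * m" and R: "\<forall>k\<le>m. two_step e L (b + 2 * k)" and "b < a"
  then obtain m' where m: "m = Suc m'" by (cases m) auto
  have "\<forall>k\<le>m'. two_step e L (b + 2 + 2 * k)"
    using R m by (auto simp: algebra_simps dest: spec[of _ "Suc _"])
  then show "\<exists>m. a = b + 2 + 2 * m \<and> (\<forall>k\<le>m. two_step e L (b + 2 + 2 * k))"
    using a m by auto
qed

lemma run_mono:
  assumes "two_step_run e L b a" and "\<And>c. b \<le> c \<Longrightarrow> c \<le> a \<Longrightarrow> two_step e L c \<Longrightarrow> two_step e L' c"
  shows "two_step_run e L' b a"
  using assms unfolding two_step_run_def by fastforce

lemma run_two_step_after:
  assumes "two_step_run e L b x" and "two_step_run e L b y" and "x < y"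
  shows "two_step e L (x+2)"
proof -
  obtain m n where x: "x = b + 2 * m" and y: "y = b + 2 * n" and R: "\<forall>k\<le>n. two_step e L (b + 2 * k)"
    using assms(1,2) unfolding two_step_run_def by blast
  have "Suc m \<le> n" using x y assms(3) by simp
  then show ?thesis using R x by (auto dest: spec[of _ "Suc m"])
qed

lemma run_left_good_eq: "two_step_run e L b a \<Longrightarrow> left_good e L a = left_good e L b"
  unfolding two_step_run_def
proof (elim exE conjE)
  fix m assume "a = b + 2 * m" and "\<forall>k\<le>m. two_step e L (b + 2 * k)"
  then show "left_good e L a = left_good e L b"
  proof (induction m arbitrary: a)
    case (Suc m)
    have D: "two_step e L (b + 2 * m)" "two_step e L (b + 2 * m + 2)"
      using Suc.prems(2) by (auto dest: spec[of _ m] spec[of _ "Suc m"])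
    then have "even (gap L (a - 1))"
      using even_gap_between_two_steps Suc.prems(1) by (simp add: add.assoc)
    then have "left_good e L a = left_good e L (a - 2)"
      using left_good_iff[of a e L] D Suc.prems(1) by auto
    also have "\<dots> = left_good e L b" using Suc by simp
    finally show ?case .
  qed simp
qed

lemma run_odd_end_unique:
  assumes "two_step_run e L b x" and "odd (gap L (x+1))"
    and "two_step_run e L b y" and "odd (gap L (y+1))"
  shows "x = y"
proof -
  have "\<not> x' < y'" if "two_step_run e L b x'" "two_step_run e L b y'" "odd (gap L (x'+1))" for x' y'
    using run_two_step_after[OF that(1,2)] run_ends_two_step[OF that(1)]
      even_gap_between_two_steps that(3) by blast
  then show ?thesis using assms by (meson linorder_neqE_nat)
qed

definition good_start :: "(nat \<Rightarrow> nat) \<Rightarrow> nat \<Rightarrow> bool" where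
  "good_start L b \<longleftrightarrow> b = 1 \<or> (2 \<le> b \<and> odd (gap L (b-1)))"

lemma left_good_run_start: "left_good e L a \<Longrightarrow> \<exists>b. two_step_run e L b a \<and> good_start L b"
proof (induction e L a rule: left_good.induct)
  case (2 e L)
  then show ?case using run_refl[of e L 1] by (auto simp: good_start_def)
next
  case (3 e L k)
  have D: "two_step e L (k+2)" using "3.prems" by simp
  from "3.prems" consider "odd (gap L (k+1))" | "left_good e L k" by auto
  then show ?case
  proof cases
    case 1
    then show ?thesis using run_refl[OF D] by (intro exI[of _ "k+2"]) (simp add: good_start_def add.commute)
  next
    case 2
    then obtain b where "two_step_run e L b k" "good_start L b" using "3.IH" by blast
    then show ?thesis using run_extend[of e L b k] D by (auto simp: add.commute)
  qed
qed simp

lemma run_left_good: "two_step_run e L b a \<Longrightarrow> good_start L b \<Longrightarrow> left_good e L a"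
  using run_left_good_eq left_good_iff run_ends_two_step two_step_ge1
  by (fastforce simp: good_start_def)

lemma left_good_iff_run: "left_good e L a \<longleftrightarrow> (\<exists>b. two_step_run e L b a \<and> good_start L b)"
  using left_good_run_start run_left_good by blast

lemma run_good_start_unique:
  assumes "two_step_run e L b a" "two_step_run e L c a" "good_start L b" "good_start L c"
  shows "b = c"
proof -
  have not_less: "\<not> b' < c'" if R: "two_step_run e L b' a" "two_step_run e L c' a" and "good_start L c'"
    for b' c'
  proof
    assume "b' < c'"
    obtain m n where m: "a = b' + 2 * m" "\<forall>k\<le>m. two_step e L (b' + 2 * k)" and n: "a = c' + 2 * n"
      using R unfolding two_step_run_def by blast
    have "n < m" using m(1) n \<open>b' < c'\<close> by linarith
    define j where "j = m - n - 1"
    have j: "c' = b' + 2 * Suc j" "Suc j \<le> m" using m(1) n \<open>n < m\<close> by (simp_all add: j_def)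
    have "two_step e L (c' - 2)" "two_step e L c'"
      using m(2)[rule_format, of j] m(2)[rule_format, of "Suc j"] j by simp_all
    then have "even (gap L (c' - 1))" using even_gap_between_two_steps[of e L "c' - 2"] j by simp
    then show False using \<open>good_start L c'\<close> \<open>b' < c'\<close> j by (auto simp: good_start_def)
  qed
  show ?thesis using not_less[of b c] not_less[of c b] assms by auto
qed

lemma left_good_transfer:
  assumes "left_good e L a" and "\<not> left_good e L' a"
  obtains c where "two_step_run e L c a"
    and "\<not> two_step e L' c \<or> (2 \<le> c \<and> odd (gap L (c-1)) \<and> even (gap L' (c-1)))"
proof -
  obtain b m where a: "a = b + 2 * m" and R: "\<forall>k\<le>m. two_step e L (b + 2 * k)" and S: "good_start L b"
    using assms(1) unfolding left_good_iff_run two_step_run_def by blast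
  show ?thesis
  proof (cases "\<forall>k\<le>m. two_step e L' (b + 2 * k)")
    case True
    then have "\<not> good_start L' b"
      using assms(2) a unfolding left_good_iff_run two_step_run_def by blast
    then have "2 \<le> b \<and> odd (gap L (b-1)) \<and> even (gap L' (b-1))"
      using S by (auto simp: good_start_def)
    moreover have "two_step_run e L b a" using a R unfolding two_step_run_def by blast
    ultimately show ?thesis using that by blast
  next
    case False
    then obtain k where k: "k \<le> m" "\<not> two_step e L' (b + 2 * k)" by blast
    have "two_step_run e L (b + 2 * k) a"
      unfolding two_step_run_def
    proof (intro exI[of _ "m - k"] conjI allI impI)
      show "a = b + 2 * k + 2 * (m - k)" using a k(1) by simp
      show "two_step e L (b + 2 * k + 2 * j)" if "j \<le> m - k" for j
        using R[rule_format, of "k + j"] that k(1) by (simp add: algebra_simps)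
    qed
    then show ?thesis using that k(2) by blast
  qed
qed

definition partition_fun :: "(nat \<Rightarrow> nat) \<Rightarrow> nat \<Rightarrow> bool" where
  "partition_fun L M \<longleftrightarrow> L 0 = 0 \<and> (\<forall>j k. 1 \<le> j \<and> j \<le> k \<longrightarrow> L k \<le> L j) \<and> (\<forall>j>M. L j = 0)"

definition z_sum :: "int \<Rightarrow> (nat \<Rightarrow> nat) \<Rightarrow> nat \<Rightarrow> int" where
  "z_sum e L M = (\<Sum>j=1..M. gap L j div 2) + (\<Sum>a=1..M. if good_end e L a then 1 else 0)"

lemma partition_fun_antimono: "partition_fun L M \<Longrightarrow> 1 \<le> j \<Longrightarrow> j \<le> k \<Longrightarrow> L k \<le> L j"
  unfolding partition_fun_def by blast

lemma partition_fun_zero: "partition_fun L M \<Longrightarrow> M < j \<Longrightarrow> L j = 0"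
  unfolding partition_fun_def by blast

lemma partition_fun_0: "partition_fun L M \<Longrightarrow> L 0 = 0"
  unfolding partition_fun_def by blast

lemma gap_nonneg: "partition_fun L M \<Longrightarrow> 1 \<le> j \<Longrightarrow> 0 \<le> gap L j"
  unfolding gap_def using partition_fun_antimono[of L M j "j+1"] by simp

lemma two_step_right_gap_pos: "partition_fun L M \<Longrightarrow> two_step e L i \<Longrightarrow> 0 < gap L (i+1)"
  unfolding gap_def using partition_fun_antimono[of L M "i+1" "i+2"] by (auto simp: two_step_def)

lemma two_step_left_gap_pos: "partition_fun L M \<Longrightarrow> two_step e L i \<Longrightarrow> 2 \<le> i \<Longrightarrow> 0 < gap L (i-1)"
proof -
  assume "partition_fun L M" "two_step e L i" "2 \<le> i"
  moreover from this have "L i \<le> L (i-1)" using partition_fun_antimono[of L M "i-1" i] by simp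
  ultimately show ?thesis by (simp add: gap_def two_step_def)
qed

lemma two_step_less_length: "partition_fun L M \<Longrightarrow> two_step e L i \<Longrightarrow> i + 1 \<le> M"
  unfolding two_step_def using partition_fun_zero[of L M "i+1"] by force

lemma good_end_two_step: "good_end e L a \<Longrightarrow> two_step e L a"
  unfolding good_end_def using left_good_two_step by blast

lemma z_sum_nonneg: "partition_fun L M \<Longrightarrow> 0 \<le> z_sum e L M"
  unfolding z_sum_def
  by (intro add_nonneg_nonneg sum_nonneg) (auto intro: gap_nonneg pos_imp_zdiv_nonneg_iff[THEN iffD2])

lemma z_sum_extend:
  assumes P: "partition_fun L M" and "M \<le> M'"
  shows "z_sum e L M' = z_sum e L M"
proof -
  have "(\<Sum>j=1..M'. gap L j div 2) = (\<Sum>j=1..M. gap L j div 2)"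
    by (rule sum.mono_neutral_right) (use assms(2) partition_fun_zero[OF P] in \<open>auto simp: gap_def\<close>)
  moreover have "(\<Sum>a=1..M'. if good_end e L a then 1 else 0::int) = (\<Sum>a=1..M. if good_end e L a then 1 else 0)"
    by (rule sum.mono_neutral_right)
      (use assms(2) two_step_less_length[OF P] good_end_two_step in \<open>fastforce+\<close>)
  ultimately show ?thesis unfolding z_sum_def by simp
qed

section \<open>Case 1 steps\<close>

definition case1_fun :: "(nat \<Rightarrow> nat) \<Rightarrow> nat \<Rightarrow> bool" where
  "case1_fun L i \<longleftrightarrow> 1 \<le> i \<and> L (i+1) + 2 \<le> L i"

definition step1_fun :: "(nat \<Rightarrow> nat) \<Rightarrow> nat \<Rightarrow> nat \<Rightarrow> nat" where
  "step1_fun L i = (\<lambda>j. if j \<le> i then L j - 2 else L j)"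

context
  fixes L :: "nat \<Rightarrow> nat" and M i :: nat
  assumes P: "partition_fun L M" and C: "case1_fun L i"
begin

lemma case1_fun_ge_2: "1 \<le> j \<Longrightarrow> j \<le> i \<Longrightarrow> 2 \<le> L j"
  using partition_fun_antimono[OF P, of j i] C unfolding case1_fun_def by simp

lemma partition_fun_step1: "partition_fun (step1_fun L i) M"
  unfolding partition_fun_def
proof (intro conjI allI impI)
  fix j k :: nat assume jk: "1 \<le> j \<and> j \<le> k"
  have "L k \<le> L j" using partition_fun_antimono[OF P] jk by blast
  moreover have "\<not> k \<le> i \<Longrightarrow> L k \<le> L (i+1)" using partition_fun_antimono[OF P, of "i+1" k] by simp
  moreover have "j \<le> i \<Longrightarrow> L i \<le> L j" using partition_fun_antimono[OF P, of j i] jk by simp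
  ultimately show "step1_fun L i k \<le> step1_fun L i j"
    using C jk by (auto simp: step1_fun_def case1_fun_def)
qed (use partition_fun_0[OF P] partition_fun_zero[OF P] in \<open>auto simp: step1_fun_def\<close>)

lemma gap_step1: "1 \<le> j \<Longrightarrow> gap (step1_fun L i) j = (if j = i then gap L j - 2 else gap L j)"
  using case1_fun_ge_2[of j] case1_fun_ge_2[of "j+1"] unfolding gap_def step1_fun_def by auto

lemma free_parity_step1: "1 \<le> j \<Longrightarrow> free_parity e (step1_fun L i j) = free_parity e (L j)"
  using case1_fun_ge_2[of j] free_parity_minus_2 by (simp add: step1_fun_def)

lemma step1_fun_neighbour_eq_iff:
  "1 \<le> j \<Longrightarrow> step1_fun L i j = step1_fun L i (j+1) \<longleftrightarrow> (if j = i then gap L i = 2 else L j = L (j+1))"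
  using case1_fun_ge_2[of j] case1_fun_ge_2[of "j+1"] C
  unfolding step1_fun_def gap_def case1_fun_def by auto

lemma step1_fun_le: "step1_fun L i j \<le> L j"
  by (simp add: step1_fun_def)

lemma two_step_step1D:
  assumes D: "two_step e (step1_fun L i) c"
  shows "two_step e L c"
proof -
  have c: "1 \<le> c" and pos: "0 < L (c+1)"
    using D step1_fun_le[of "c+1"] by (auto simp: two_step_def)
  have Li: "L i \<noteq> L (i+1)" using C by (simp add: case1_fun_def)
  have "L (c-1) \<noteq> L c"
  proof (cases "c = 1")
    case True
    then show ?thesis using pos partition_fun_0[OF P] partition_fun_antimono[OF P, of 1 "c+1"] by simp
  next
    case False
    then obtain k where k: "c = Suc k" "1 \<le> k" using c by (cases c) auto
    then show ?thesis
      using D Li step1_fun_neighbour_eq_iff[of k] by (auto simp: two_step_def split: if_splits)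
  qed
  moreover have "L (c+1) \<noteq> L (c+2)"
    using D Li step1_fun_neighbour_eq_iff[of "c+1"] by (auto simp: two_step_def split: if_splits)
  ultimately show ?thesis
    using D c pos free_parity_step1[of c] free_parity_step1[of "c+1"] by (simp add: two_step_def)
qed

lemma two_step_step1_lost:
  assumes D: "two_step e L c" and ND: "\<not> two_step e (step1_fun L i) c" and "i \<le> c"
  shows "c = i + 1 \<and> gap L i = 2"
proof -
  have c: "1 \<le> c" using D by (simp add: two_step_def)
  have same: "step1_fun L i (c+1) = L (c+1)" "step1_fun L i (c+2) = L (c+2)"
    using \<open>i \<le> c\<close> by (auto simp: step1_fun_def)
  have left: "step1_fun L i (c-1) = step1_fun L i c"
    using ND D c same free_parity_step1[of c] free_parity_step1[of "c+1"] by (auto simp: two_step_def)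
  have "c \<noteq> 1"
  proof
    assume "c = 1"
    then have "step1_fun L i c = 0" using left partition_fun_0[OF partition_fun_step1] by simp
    moreover have "step1_fun L i (c+1) \<le> step1_fun L i c"
      using partition_fun_antimono[OF partition_fun_step1, of c "c+1"] c by simp
    ultimately show False using same D by (simp add: two_step_def)
  qed
  then obtain k where k: "c = Suc k" "1 \<le> k" using c by (cases c) auto
  then show ?thesis
    using left D step1_fun_neighbour_eq_iff[of k] by (auto simp: two_step_def split: if_splits)
qed

lemma odd_gap_step1: "0 < j \<Longrightarrow> odd (gap (step1_fun L i) j) = odd (gap L j)"
  using gap_step1[of j] by auto

lemma good_end_step1D: "good_end e (step1_fun L i) a \<Longrightarrow> good_end e L a"
proof -
  assume G: "good_end e (step1_fun L i) a"
  have "left_good e L a"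
  proof (rule ccontr)
    assume "\<not> left_good e L a"
    with G obtain c where R: "two_step_run e (step1_fun L i) c a"
      and h: "\<not> two_step e L c \<or> (2 \<le> c \<and> odd (gap (step1_fun L i) (c-1)) \<and> even (gap L (c-1)))"
      using left_good_transfer unfolding good_end_def by metis
    have "two_step e L c" using run_ends_two_step[OF R] two_step_step1D by blast
    then show False using h odd_gap_step1[of "c-1"] by auto
  qed
  then show ?thesis using G odd_gap_step1[of "a+1"] by (simp add: good_end_def)
qed

lemma good_end_step1I:
  assumes Mn: "\<forall>j. 1 \<le> j \<and> j < i \<longrightarrow> \<not> two_step e L j" and G: "good_end e L a"
  shows "good_end e (step1_fun L i) a"
proof -
  have "left_good e (step1_fun L i) a"
  proof (rule ccontr)
    assume "\<not> left_good e (step1_fun L i) a"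
    with G obtain c where R: "two_step_run e L c a"
      and h: "\<not> two_step e (step1_fun L i) c \<or> (2 \<le> c \<and> odd (gap L (c-1)) \<and> even (gap (step1_fun L i) (c-1)))"
      using left_good_transfer unfolding good_end_def by metis
    have Dc: "two_step e L c" using run_ends_two_step[OF R] by simp
    show False
    proof (cases "two_step e (step1_fun L i) c")
      case True
      then show False using h odd_gap_step1[of "c-1"] by auto
    next
      case False
      have "i \<le> c" using Mn Dc two_step_ge1[OF Dc] by (meson not_le)
      from two_step_step1_lost[OF Dc False this] have c: "c = i + 1" "gap L i = 2" by auto
      have "left_good e L c" using run_left_good_eq[OF R] G by (simp add: good_end_def)
      then have "left_good e L (i - 1)" using left_good_iff[of c e L] c C by (auto simp: case1_fun_def)
      then have "two_step e L (i - 1)" by (rule left_good_two_step)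
      then show False using Mn two_step_ge1[of e L "i - 1"] by simp
    qed
  qed
  then show ?thesis using G odd_gap_step1[of "a+1"] by (simp add: good_end_def)
qed

lemma half_gaps_step1:
  "(\<Sum>j=1..M. gap (step1_fun L i) j div 2) = (\<Sum>j=1..M. gap L j div 2) - 1"
proof -
  have iM: "i \<in> {1..M}" using C partition_fun_zero[OF P, of i] by (auto simp: case1_fun_def) (metis not_le)
  have "(\<Sum>j=1..M. gap (step1_fun L i) j div 2) = (\<Sum>j=1..M. gap L j div 2 - (if j = i then 1 else 0))"
    by (rule sum.cong) (auto simp: gap_step1)
  also have "\<dots> = (\<Sum>j=1..M. gap L j div 2) - 1"
    using iM by (simp add: sum_subtractf)
  finally show ?thesis .
qed

lemma z_sum_step1_le: "z_sum e (step1_fun L i) M + 1 \<le> z_sum e L M"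
proof -
  have "(\<Sum>a=1..M. if good_end e (step1_fun L i) a then 1 else 0::int) \<le> (\<Sum>a=1..M. if good_end e L a then 1 else 0)"
    by (rule sum_mono) (use good_end_step1D in auto)
  then show ?thesis unfolding z_sum_def using half_gaps_step1 by linarith
qed

lemma z_sum_step1_eq:
  assumes "\<forall>j. 1 \<le> j \<and> j < i \<longrightarrow> \<not> two_step e L j"
  shows "z_sum e (step1_fun L i) M + 1 = z_sum e L M"
proof -
  have "(\<Sum>a=1..M. if good_end e (step1_fun L i) a then 1 else 0::int) = (\<Sum>a=1..M. if good_end e L a then 1 else 0)"
    by (rule sum.cong) (use good_end_step1D good_end_step1I[OF assms] in auto)
  then show ?thesis unfolding z_sum_def using half_gaps_step1 by linarith
qed

end

section \<open>Case 2 steps\<close>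

definition case2_fun :: "int \<Rightarrow> (nat \<Rightarrow> nat) \<Rightarrow> nat \<Rightarrow> bool" where
  "case2_fun e L i \<longleftrightarrow> two_step e L i \<and> L i = L (i+1)"

definition step2_fun :: "(nat \<Rightarrow> nat) \<Rightarrow> nat \<Rightarrow> nat \<Rightarrow> nat" where
  "step2_fun L i = (\<lambda>j. if j < i then L j - 2 else if j = i \<or> j = i + 1 then L j - 1 else L j)"

context
  fixes e :: int and L :: "nat \<Rightarrow> nat" and M i :: nat
  assumes P: "partition_fun L M" and C: "case2_fun e L i"
begin

lemma case2_funD:
  shows "1 \<le> i" "1 \<le> L i" "L (i+1) = L i" "L (i+2) < L (i+1)" "free_parity e (L i)"
    and "\<And>j. 1 \<le> j \<Longrightarrow> j < i \<Longrightarrow> L i + 1 \<le> L j"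
proof -
  show "1 \<le> i" "1 \<le> L i" "L (i+1) = L i" "free_parity e (L i)"
    using C unfolding case2_fun_def two_step_def by auto
  show "L (i+2) < L (i+1)"
    using C partition_fun_antimono[OF P, of "i+1" "i+2"] unfolding case2_fun_def two_step_def by auto
  fix j assume j: "1 \<le> j" "j < i"
  have "L (i-1) \<noteq> L i" using C unfolding case2_fun_def two_step_def by auto
  moreover have "L i \<le> L (i-1)" "L (i-1) \<le> L j"
    using partition_fun_antimono[OF P, of "i-1" i] partition_fun_antimono[OF P, of j "i-1"] j by auto
  ultimately show "L i + 1 \<le> L j" by linarith
qed

lemma case2_fun_not_two_step_succ: "\<not> two_step e L (i+1)"
  using case2_funD(3) by (simp add: two_step_def)

lemma partition_fun_step2: "partition_fun (step2_fun L i) M"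
  unfolding partition_fun_def
proof (intro conjI allI impI)
  fix j k :: nat assume jk: "1 \<le> j \<and> j \<le> k"
  have "L k \<le> L j" using partition_fun_antimono[OF P] jk by blast
  moreover have "j < i \<Longrightarrow> L i + 1 \<le> L j" using case2_funD(6) jk by blast
  moreover have "i + 2 \<le> k \<Longrightarrow> L k \<le> L (i+2)" using partition_fun_antimono[OF P, of "i+2" k] by simp
  ultimately show "step2_fun L i k \<le> step2_fun L i j"
    using jk case2_funD(3,4) unfolding step2_fun_def by (cases "k = i"; cases "k = i+1"; auto)
qed (use partition_fun_0[OF P] partition_fun_zero[OF P] in \<open>auto simp: step2_fun_def\<close>)

lemma gap_step2:
  "1 \<le> j \<Longrightarrow> gap (step2_fun L i) j = (if j + 1 = i \<or> j = i + 1 then gap L j - 1 else gap L j)"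
  using case2_funD(2,3) case2_funD(6)[of j] case2_funD(6)[of "j+1"] unfolding gap_def step2_fun_def by auto

lemma odd_gap_step2:
  "0 < j \<Longrightarrow> odd (gap (step2_fun L i) j) \<longleftrightarrow> (j + 1 = i \<or> j = i + 1 \<longleftrightarrow> even (gap L j))"
  using gap_step2[of j] by auto

lemma free_parity_step2:
  "1 \<le> j \<Longrightarrow> free_parity e (step2_fun L i j) \<longleftrightarrow> free_parity e (L j) \<and> j \<noteq> i \<and> j \<noteq> i + 1"
  using case2_funD(2,3,5) case2_funD(6)[of j] free_parity_minus_2[of "L j" e] free_parity_minus_1[of "L i" e]
  by (auto simp: step2_fun_def)

lemma step2_fun_keeps_equal_neighbours:
  "L j = L (j+1) \<Longrightarrow> step2_fun L i j = step2_fun L i (j+1)"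
  using C case2_funD(4) by (auto simp: step2_fun_def case2_fun_def two_step_def)

lemma two_step_step2D:
  assumes D: "two_step e (step2_fun L i) c"
  shows "two_step e L c \<and> c \<noteq> i"
proof -
  have "step2_fun L i (c+1) \<le> L (c+1)" by (simp add: step2_fun_def)
  then have c: "1 \<le> c" and pos: "0 < L (c+1)" using D by (auto simp: two_step_def)
  have fp: "free_parity e (L c)" "free_parity e (L (c+1))" "c \<noteq> i"
    using D free_parity_step2[of c] free_parity_step2[of "c+1"] c by (auto simp: two_step_def)
  have "L (c-1) \<noteq> L c"
  proof (cases "c = 1")
    case True
    then show ?thesis using pos partition_fun_0[OF P] partition_fun_antimono[OF P, of 1 "c+1"] by simp
  next
    case False
    then obtain k where "c = Suc k" using c by (cases c) auto
    then show ?thesis using D step2_fun_keeps_equal_neighbours[of k] by (auto simp: two_step_def)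
  qed
  moreover have "L (c+1) \<noteq> L (c+2)"
    using D step2_fun_keeps_equal_neighbours[of "c+1"] by (auto simp: two_step_def)
  ultimately show ?thesis using c pos fp by (simp add: two_step_def)
qed

lemma two_step_step2I:
  assumes D: "two_step e L c" and "i < c"
  shows "two_step e (step2_fun L i) c"
proof -
  consider "c = i + 1" | "c = i + 2" | "i + 2 < c" using \<open>i < c\<close> by linarith
  then show ?thesis
  proof cases
    case 1
    then show ?thesis using D case2_funD(3) by (auto simp: two_step_def)
  next
    case 2
    have "even (int (L (i+1)) - int (L (i+2)))"
      using free_parity_even_diff[of e "L (i+1)" "L (i+2)"] D case2_funD(3,5) 2 by (auto simp: two_step_def)
    then have "L (i+2) + 2 \<le> L (i+1)" using case2_funD(4) by presburger
    then show ?thesis using D 2 by (auto simp: two_step_def step2_fun_def)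
  next
    case 3
    then have "\<not> c - 1 < i" "c - 1 \<noteq> i" "c - 1 \<noteq> i + 1" by linarith+
    then show ?thesis using D 3 by (auto simp: two_step_def step2_fun_def)
  qed
qed

lemma half_gaps_step2:
  "(\<Sum>j=1..M. gap (step2_fun L i) j div 2) = (\<Sum>j=1..M. gap L j div 2)
     - (if 2 \<le> i \<and> even (gap L (i-1)) then 1 else 0) - (if even (gap L (i+1)) then 1 else 0)"
proof -
  have i1: "1 \<le> i" using case2_funD(1) .
  have iM: "i + 1 \<le> M" using two_step_less_length[OF P, of e i] C by (simp add: case2_fun_def)
  let ?dl = "\<lambda>j. if j = i - 1 \<and> 2 \<le> i \<and> even (gap L (i-1)) then 1 else 0 :: int"
  let ?dr = "\<lambda>j. if j = i + 1 \<and> even (gap L (i+1)) then 1 else 0 :: int"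
  have "(\<Sum>j=1..M. gap (step2_fun L i) j div 2) = (\<Sum>j=1..M. gap L j div 2 - ?dl j - ?dr j)"
    by (rule sum.cong) (use gap_step2 i1 minus_1_div_2 in auto)
  also have "\<dots> = (\<Sum>j=1..M. gap L j div 2) - sum ?dl {1..M} - sum ?dr {1..M}"
    by (simp add: sum_subtractf)
  also have "sum ?dl {1..M} = (if 2 \<le> i \<and> even (gap L (i-1)) then 1 else 0)"
    using iM by (auto simp: sum.delta')
  also have "sum ?dr {1..M} = (if even (gap L (i+1)) then 1 else 0)"
    using iM by (auto simp: sum.delta')
  finally show ?thesis .
qed

lemma not_good_end_step2_at: "\<not> good_end e (step2_fun L i) i"
  using two_step_step2D good_end_two_step by blast

lemma good_end_step2D:
  assumes G: "good_end e (step2_fun L i) a"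
  shows "a \<noteq> i \<and> (good_end e L a \<or> (a + 2 = i \<and> even (gap L (i-1)) \<and> left_good e L i) \<or>
    (even (gap L (i+1)) \<and> \<not> left_good e L i \<and> two_step_run e L (i+2) a \<and> odd (gap L (a+1))))"
proof -
  let ?L' = "step2_fun L i"
  have ai: "a \<noteq> i" using G not_good_end_step2_at by blast
  have od': "odd (gap ?L' (a+1))" and lg': "left_good e ?L' a" using G by (auto simp: good_end_def)
  have Di: "two_step e L i" using C by (simp add: case2_fun_def)
  consider "good_end e L a" | "left_good e L a" "\<not> good_end e L a" | "\<not> left_good e L a"
    by blast
  then show ?thesis
  proof cases
    case 2
    then have "a + 2 = i" using od' odd_gap_step2[of "a+1"] ai by (auto simp: good_end_def)
    moreover from this have "even (gap L (i-1))" using od' odd_gap_step2[of "a+1"] by auto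
    ultimately show ?thesis using 2 Di left_good_iff[of i e L] ai by auto
  next
    case 3
    with lg' obtain c where R: "two_step_run e ?L' c a"
      and h: "\<not> two_step e L c \<or> (2 \<le> c \<and> odd (gap ?L' (c-1)) \<and> even (gap L (c-1)))"
      by (rule left_good_transfer)
    have "two_step e L c" "c \<noteq> i" using run_ends_two_step[OF R] two_step_step2D by auto
    with h have "c = i + 2" using odd_gap_step2[of "c-1"] by auto
    with R have R2: "two_step_run e L (i+2) a"
      using run_mono two_step_step2D by blast
    have "even (gap L (i+1))"
      using even_gap_between_two_steps[OF Di] run_ends_two_step[OF R2] by simp
    moreover have "\<not> left_good e L i"
      using run_prepend[OF Di R2] run_left_good_eq 3 by blast
    moreover have "odd (gap L (a+1))" using od' odd_gap_step2[of "a+1"] run_le[OF R2] by auto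
    ultimately show ?thesis using R2 ai by blast
  qed (use ai in blast)
qed

lemma good_end_count_step2:
  "(\<Sum>a=1..M. if good_end e (step2_fun L i) a then 1 else 0::int) \<le>
     (\<Sum>a=1..M. if good_end e L a then 1 else 0) - (if good_end e L i then 1 else 0)
     + (if 2 \<le> i \<and> even (gap L (i-1)) \<and> left_good e L i then 1 else 0)
     + (if even (gap L (i+1)) \<and> \<not> left_good e L i then 1 else 0)"
proof -
  let ?A = "\<lambda>a. good_end e L a \<and> a \<noteq> i"
  let ?B = "\<lambda>a. a + 2 = i \<and> even (gap L (i-1)) \<and> left_good e L i"
  let ?R = "\<lambda>a. even (gap L (i+1)) \<and> \<not> left_good e L i \<and> two_step_run e L (i+2) a \<and> odd (gap L (a+1))"
  let ?I = "\<lambda>P a. if P a then 1 else 0::int"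
  have iM: "i \<in> {1..M}"
    using case2_funD(1) two_step_less_length[OF P, of e i] C by (simp add: case2_fun_def)
  have "(\<Sum>a=1..M. ?I (good_end e (step2_fun L i)) a) \<le> (\<Sum>a=1..M. ?I ?A a + ?I ?B a + ?I ?R a)"
    by (rule sum_mono) (use good_end_step2D in fastforce)
  also have "\<dots> = sum (?I ?A) {1..M} + sum (?I ?B) {1..M} + sum (?I ?R) {1..M}"
    by (simp add: sum.distrib)
  also have "sum (?I ?A) {1..M} = (\<Sum>a=1..M. ?I (good_end e L) a) - ?I (good_end e L) i"
    using iM by (simp add: sum.remove[of _ i] sum.cong[of "{1..M} - {i}" _ "?I ?A" "?I (good_end e L)"])
  also have "sum (?I ?B) {1..M} \<le> (if 2 \<le> i \<and> even (gap L (i-1)) \<and> left_good e L i then 1 else 0)"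
    by (rule sum_indicator_le_indicator) auto
  also have "sum (?I ?R) {1..M} \<le> (if even (gap L (i+1)) \<and> \<not> left_good e L i then 1 else 0)"
    by (rule sum_indicator_le_indicator) (auto intro: run_odd_end_unique)
  finally show ?thesis by simp
qed

lemma z_sum_step2_le: "z_sum e (step2_fun L i) M + 1 \<le> z_sum e L M"
proof -
  have "\<not> (2 \<le> i \<and> even (gap L (i-1))) \<Longrightarrow> left_good e L i"
    using left_good_iff[of i e L] case2_funD(1) C by (auto simp: case2_fun_def)
  then show ?thesis
    using good_end_count_step2 half_gaps_step2 unfolding z_sum_def good_end_def
    by (auto split: if_splits)
qed

lemma good_end_step2I:
  assumes Mn: "\<forall>j. 1 \<le> j \<and> j < i \<longrightarrow> \<not> two_step e L j" and "a \<noteq> i" and G: "good_end e L a"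
  shows "good_end e (step2_fun L i) a"
proof -
  let ?L' = "step2_fun L i"
  have Di: "two_step e L i" using C by (simp add: case2_fun_def)
  have above: "i + 2 \<le> c" if "two_step e L c" "c \<noteq> i" for c
  proof -
    have "i \<le> c" using Mn that(1) two_step_ge1[OF that(1)] by (meson not_le)
    moreover have "c \<noteq> i + 1" using that(1) case2_fun_not_two_step_succ by blast
    ultimately show ?thesis using that(2) by linarith
  qed
  obtain b where R: "two_step_run e L b a" and S: "good_start L b"
    using G left_good_iff_run unfolding good_end_def by blast
  have ai2: "i + 2 \<le> a" using above[of a] G good_end_two_step \<open>a \<noteq> i\<close> by blast
  have "left_good e ?L' a"
  proof (cases "b = i")
    case True
    then have R2: "two_step_run e L (i+2) a" using run_drop_first[OF R] ai2 by simp
    have "even (gap L (i+1))" using even_gap_between_two_steps[OF Di] run_ends_two_step[OF R2] by simp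
    then have "good_start ?L' (i+2)" using odd_gap_step2[of "i+1"] by (simp add: good_start_def)
    moreover have "two_step_run e ?L' (i+2) a" using run_mono[OF R2] two_step_step2I by simp
    ultimately show ?thesis using run_left_good by blast
  next
    case False
    then have b: "i + 2 \<le> b" using above run_ends_two_step[OF R] by blast
    have "b \<noteq> i + 2"
      using S even_gap_between_two_steps[OF Di] run_ends_two_step[OF R] by (auto simp: good_start_def)
    then have "good_start ?L' b" using S b odd_gap_step2[of "b-1"] by (auto simp: good_start_def)
    moreover have "two_step_run e ?L' b a" using run_mono[OF R] two_step_step2I b by simp
    ultimately show ?thesis using run_left_good by blast
  qed
  then show ?thesis using G odd_gap_step2[of "a+1"] ai2 by (simp add: good_end_def)
qed

lemma z_sum_step2_eq:
  assumes Mn: "\<forall>j. 1 \<le> j \<and> j < i \<longrightarrow> \<not> two_step e L j" and Md: "2 \<le> i \<longrightarrow> gap L (i-1) \<le> 1"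
  shows "z_sum e (step2_fun L i) M + 1 = z_sum e L M"
proof -
  have Di: "two_step e L i" using C by (simp add: case2_fun_def)
  have neL: "\<not> (2 \<le> i \<and> even (gap L (i-1)))"
    using Md two_step_left_gap_pos[OF P Di] by (auto simp: le_Suc_eq)
  then have lg: "left_good e L i" using left_good_iff[of i e L] case2_funD(1) Di by auto
  have iM: "i \<in> {1..M}" using case2_funD(1) two_step_less_length[OF P Di] by simp
  have "good_end e (step2_fun L i) a \<longleftrightarrow> good_end e L a \<and> a \<noteq> i" for a
    using good_end_step2D[of a] good_end_step2I[OF Mn, of a] neL lg by auto
  then have "(\<Sum>a=1..M. if good_end e (step2_fun L i) a then 1 else 0::int)
      = (\<Sum>a=1..M. if good_end e L a then 1 else 0) - (if good_end e L i then 1 else 0)"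
    using iM by (simp add: sum.remove[of _ i] sum.cong[of "{1..M} - {i}"])
  then show ?thesis
    using half_gaps_step2 neL lg unfolding z_sum_def good_end_def by auto
qed

end

lemma no_case_small_gap:
  assumes P: "partition_fun L M" and "1 \<le> j" and "\<not> case1_fun L j" and "\<not> case2_fun e L j"
  shows "gap L j \<le> 1 \<and> \<not> two_step e L j"
proof
  show small: "gap L j \<le> 1" using assms(2,3) unfolding case1_fun_def gap_def by auto
  show "\<not> two_step e L j"
  proof
    assume D: "two_step e L j"
    then have "L j \<noteq> L (j+1)" using assms(4) by (simp add: case2_fun_def)
    moreover have "L (j+1) \<le> L j" using partition_fun_antimono[OF P, of j "j+1"] assms(2) by simp
    moreover have "even (gap L j)"
      using free_parity_even_diff[of e "L j" "L (j+1)"] D unfolding two_step_def gap_def by simp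
    ultimately show False using small unfolding gap_def by presburger
  qed
qed

lemma z_sum_no_case:
  assumes P: "partition_fun L M" and N: "\<forall>j. 1 \<le> j \<longrightarrow> \<not> case1_fun L j \<and> \<not> case2_fun e L j"
  shows "z_sum e L M = 0"
proof -
  have "gap L j div 2 = 0" if "j \<in> {1..M}" for j
    using no_case_small_gap[OF P, of j e] N gap_nonneg[OF P, of j] that by auto
  moreover have "\<not> good_end e L a" if "a \<in> {1..M}" for a
    using no_case_small_gap[OF P, of a e] N good_end_two_step that by auto
  ultimately show ?thesis unfolding z_sum_def by simp
qed

lemma z_sum_exact_step:
  assumes P: "partition_fun L M" and "0 < z_sum e L M"
  obtains i where "case1_fun L i" and "z_sum e (step1_fun L i) M + 1 = z_sum e L M"
    | i where "case2_fun e L i" and "\<not> case1_fun L i" and "z_sum e (step2_fun L i) M + 1 = z_sum e L M"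
proof -
  have "\<exists>i. case1_fun L i \<or> case2_fun e L i"
    using z_sum_no_case[OF P] assms(2) case1_fun_def by fastforce
  define i where "i = (LEAST i. case1_fun L i \<or> case2_fun e L i)"
  have Ci: "case1_fun L i \<or> case2_fun e L i"
    unfolding i_def by (rule LeastI_ex) fact
  have below: "gap L j \<le> 1 \<and> \<not> two_step e L j" if "1 \<le> j" "j < i" for j
    using no_case_small_gap[OF P, of j] not_less_Least[of j] that unfolding i_def by blast
  then have Mn: "\<forall>j. 1 \<le> j \<and> j < i \<longrightarrow> \<not> two_step e L j" by blast
  show ?thesis
  proof (cases "case1_fun L i")
    case True
    then show ?thesis using that(1) z_sum_step1_eq[OF P True Mn] by blast
  next
    case False
    with Ci have C2: "case2_fun e L i" by simp
    have "2 \<le> i \<longrightarrow> gap L (i-1) \<le> 1" using below by simp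
    then show ?thesis using that(2) z_sum_step2_eq[OF P C2 Mn] C2 False by blast
  qed
qed

section \<open>Back to partitions as lists\<close>

lemma lam_Cons: "lam (y # ys) j = (if j = 0 then 0 else if j = 1 then y else lam ys (j - 1))"
  unfolding lam_def by (auto simp: nth_Cons')

lemma lam_filter_pos: "sorted_wrt (\<ge>) ys \<Longrightarrow> lam (filter (\<lambda>x. 0 < x) ys) = lam ys"
proof (induction ys)
  case (Cons y ys)
  show ?case
  proof (cases "0 < y")
    case True
    then show ?thesis using Cons by (auto simp: lam_Cons fun_eq_iff)
  next
    case False
    then have Z: "\<forall>x\<in>set (y # ys). x = 0" using Cons.prems by auto
    then have "lam (y # ys) j = 0" for j using nth_mem[of "j-1" "y # ys"] unfolding lam_def by auto
    moreover have "filter (\<lambda>x. 0 < x) (y # ys) = []" using Z by (auto simp: filter_empty_conv)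
    ultimately show ?thesis by (simp add: fun_eq_iff lam_def)
  qed
qed simp

lemma lam_map_upt: "lam (map f [1..<n+1]) j = (if 1 \<le> j \<and> j \<le> n then f j else 0)"
  unfolding lam_def by (auto simp del: upt_Suc simp: nth_upt)

lemma partition_fun_lam: "sorted_wrt (\<ge>) xs \<Longrightarrow> partition_fun (lam xs) (length xs)"
  unfolding partition_fun_def
proof (intro conjI allI impI)
  fix j k :: nat assume "sorted_wrt (\<ge>) xs" "1 \<le> j \<and> j \<le> k"
  then show "lam xs k \<le> lam xs j"
    unfolding lam_def sorted_wrt_iff_nth_less by (cases "j = k") auto
qed (auto simp: lam_def)

lemma lam_pos_iff: "(\<forall>x\<in>set xs. 0 < x) \<Longrightarrow> 0 < lam xs j \<longleftrightarrow> 1 \<le> j \<and> j \<le> length xs"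
  unfolding lam_def by auto

lemma partition_fun_to_list:
  assumes "partition_fun F n"
  defines "ys \<equiv> filter (\<lambda>x. 0 < x) (map F [1..<n+1])"
  shows "lam ys = F" "sorted_wrt (\<ge>) ys" "\<forall>x\<in>set ys. 0 < x" "length ys \<le> n"
proof -
  have s: "sorted_wrt (\<ge>) (map F [1..<n+1])"
    using partition_fun_antimono[OF assms(1)]
    unfolding sorted_wrt_iff_nth_less by (auto simp del: upt_Suc simp: nth_upt)
  show "lam ys = F"
  proof
    fix j show "lam ys j = F j"
      unfolding ys_def lam_filter_pos[OF s] lam_map_upt
      using partition_fun_0[OF assms(1)] partition_fun_zero[OF assms(1)] by (auto simp: not_le)
  qed
  show "sorted_wrt (\<ge>) ys" unfolding ys_def using s sorted_wrt_filter by blast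
  show "\<forall>x\<in>set ys. 0 < x" unfolding ys_def by simp
  show "length ys \<le> n"
    unfolding ys_def using length_filter_le[of _ "map F [1..<n+1]"] by (simp del: upt_Suc)
qed

lemma case1_iff: "case1 xs i \<longleftrightarrow> case1_fun (lam xs) i"
  unfolding case1_def case1_fun_def by (auto simp: lam_def)

lemma two_steps_eq:
  "(\<forall>x\<in>set xs. 0 < x) \<Longrightarrow> two_steps eps xs = (\<lambda>i. (i, i+1)) ` {i. two_step eps (lam xs) i}"
  unfolding two_steps_def two_step_def free_parity_def using lam_pos_iff[of xs]
  by (auto simp: image_def)

lemma case2_iff: "(\<forall>x\<in>set xs. 0 < x) \<Longrightarrow> case2 eps xs i \<longleftrightarrow> case2_fun eps (lam xs) i"
  unfolding case2_def case2_fun_def using two_steps_eq[of xs eps] lam_pos_iff[of xs "i+1"]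
  by (auto simp: two_step_def)

lemma ks_step_case1:
  assumes "sorted_wrt (\<ge>) xs" and "case1 xs i"
  shows "lam (ks_step eps xs i) = step1_fun (lam xs) i \<and> sorted_wrt (\<ge>) (ks_step eps xs i) \<and>
         (\<forall>x\<in>set (ks_step eps xs i). 0 < x) \<and> length (ks_step eps xs i) \<le> length xs"
proof -
  have P: "partition_fun (lam xs) (length xs)" using partition_fun_lam[OF assms(1)] .
  have C: "case1_fun (lam xs) i" using assms(2) case1_iff by blast
  have ks: "ks_step eps xs i = filter (\<lambda>x. 0 < x) (map (step1_fun (lam xs) i) [1..<length xs + 1])"
    using assms(2) by (simp add: ks_step_def step1_fun_def)
  show ?thesis
    unfolding ks by (intro conjI partition_fun_to_list[OF partition_fun_step1[OF P C]])
qed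

lemma ks_step_case2:
  assumes "sorted_wrt (\<ge>) xs" and "\<forall>x\<in>set xs. 0 < x" and "case2 eps xs i" and "\<not> case1 xs i"
  shows "lam (ks_step eps xs i) = step2_fun (lam xs) i \<and> sorted_wrt (\<ge>) (ks_step eps xs i) \<and>
         (\<forall>x\<in>set (ks_step eps xs i). 0 < x) \<and> length (ks_step eps xs i) \<le> length xs"
proof -
  have P: "partition_fun (lam xs) (length xs)" using partition_fun_lam[OF assms(1)] .
  have C: "case2_fun eps (lam xs) i" using assms(2,3) case2_iff by blast
  have ks: "ks_step eps xs i = filter (\<lambda>x. 0 < x) (map (step2_fun (lam xs) i) [1..<length xs + 1])"
    using assms(3,4) by (simp add: ks_step_def step2_fun_def)
  show ?thesis
    unfolding ks by (intro conjI partition_fun_to_list[OF partition_fun_step2[OF P C]])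
qed

section \<open>Good 2-clusters\<close>

definition progression :: "nat \<Rightarrow> nat \<Rightarrow> nat list" where
  "progression b m = map (\<lambda>k. b + 2 * k) [0..<m+1]"

lemma length_progression [simp]: "length (progression b m) = m + 1"
  by (simp add: progression_def)

lemma progression_nth: "k \<le> m \<Longrightarrow> progression b m ! k = b + 2 * k"
  unfolding progression_def by (simp del: upt_Suc add: less_Suc_eq_le)

lemma hd_progression: "hd (progression b m) = b"
  unfolding progression_def by (simp del: upt_Suc add: hd_map upt_rec)

lemma last_progression: "last (progression b m) = b + 2 * m"
  unfolding progression_def by (simp del: upt_Suc add: last_map)

lemma two_cluster_iff:
  assumes "\<forall>x\<in>set xs. 0 < x"
  shows "two_cluster eps xs cs \<longleftrightarrow>
    (\<exists>b m. 1 \<le> m \<and> cs = progression b m \<and> two_step_run eps (lam xs) b (b + 2 * m))"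
proof
  assume T: "two_cluster eps xs cs"
  define b m where "b = cs ! 0" and "m = length cs - 1"
  have l: "2 \<le> length cs" using T by (simp add: two_cluster_def)
  have nth: "cs ! k = b + 2 * k" if "k < length cs" for k
    using that T unfolding b_def two_cluster_def by (induction k) auto
  have cs: "cs = progression b m"
  proof (rule nth_equalityI)
    show "length cs = length (progression b m)" using l by (simp add: m_def)
    fix k assume "k < length cs"
    then show "cs ! k = progression b m ! k" using nth progression_nth[of k m b] by (simp add: m_def)
  qed
  have "two_step eps (lam xs) (b + 2 * k)" if "k \<le> m" for k
  proof -
    have "k < length cs" using that l by (simp add: m_def)
    then have "(cs ! k, cs ! k + 1) \<in> two_steps eps xs" using T by (simp add: two_cluster_def)
    then show ?thesis using nth[OF \<open>k < length cs\<close>] two_steps_eq[OF assms] by auto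
  qed
  then have "two_step_run eps (lam xs) b (b + 2 * m)" unfolding two_step_run_def by blast
  moreover have "1 \<le> m" using l by (simp add: m_def)
  ultimately show "\<exists>b m. 1 \<le> m \<and> cs = progression b m \<and> two_step_run eps (lam xs) b (b + 2 * m)"
    using cs by blast
next
  assume "\<exists>b m. 1 \<le> m \<and> cs = progression b m \<and> two_step_run eps (lam xs) b (b + 2 * m)"
  then obtain b m where m: "1 \<le> m" and cs: "cs = progression b m"
    and R: "\<forall>k\<le>m. two_step eps (lam xs) (b + 2 * k)"
    unfolding two_step_run_def by auto
  have "(cs ! j, cs ! j + 1) \<in> two_steps eps xs" if "j < length cs" for j
    using R that two_steps_eq[OF assms] by (simp add: cs progression_nth)
  moreover have "cs ! (j+1) = cs ! j + 2" if "j + 1 < length cs" for j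
    using that by (simp add: cs progression_nth)
  ultimately show "two_cluster eps xs cs" using m cs by (simp add: two_cluster_def)
qed

lemma good_cluster_iff:
  assumes s: "sorted_wrt (\<ge>) xs" and p: "\<forall>x\<in>set xs. 0 < x"
  shows "cs \<in> good_clusters eps xs \<longleftrightarrow>
    (\<exists>b m. 1 \<le> m \<and> cs = progression b m \<and> two_step_run eps (lam xs) b (b + 2 * m) \<and>
       good_start (lam xs) b \<and> odd (gap (lam xs) (b + 2 * m + 1)))"
proof -
  have P: "partition_fun (lam xs) (length xs)" using partition_fun_lam[OF s] .
  have "\<not> bad_boundary xs (progression b m) \<longleftrightarrow> good_start (lam xs) b \<and> odd (gap (lam xs) (b + 2 * m + 1))"
    if R: "two_step_run eps (lam xs) b (b + 2 * m)" for b m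
  proof -
    have "two_step eps (lam xs) b" "two_step eps (lam xs) (b + 2 * m)" using run_ends_two_step[OF R] by auto
    then have "2 \<le> b \<Longrightarrow> 0 < gap (lam xs) (b - 1)" "0 < gap (lam xs) (b + 2 * m + 1)" "1 \<le> b"
      using two_step_left_gap_pos[OF P] two_step_right_gap_pos[OF P] two_step_ge1 by auto
    then show ?thesis
      unfolding bad_boundary_def hd_progression last_progression pos_even_def good_start_def gap_def
      by (auto simp: le_Suc_eq)
  qed
  then show ?thesis unfolding good_clusters_def mem_Collect_eq two_cluster_iff[OF p] by metis
qed

lemma inj_on_last_good_clusters:
  assumes s: "sorted_wrt (\<ge>) xs" and p: "\<forall>x\<in>set xs. 0 < x"
  shows "inj_on last (good_clusters eps xs)"
proof (rule inj_onI)
  let ?L = "lam xs"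
  fix cs ds assume "cs \<in> good_clusters eps xs" "ds \<in> good_clusters eps xs" "last cs = last ds"
  then obtain b m c n where cs: "cs = progression b m" "two_step_run eps ?L b (b + 2 * m)" "good_start ?L b"
    and ds: "ds = progression c n" "two_step_run eps ?L c (c + 2 * n)" "good_start ?L c"
    and "b + 2 * m = c + 2 * n"
    unfolding good_cluster_iff[OF s p] by (auto simp: last_progression)
  moreover from this have "b = c" using run_good_start_unique by metis
  ultimately show "cs = ds" by simp
qed

lemma last_good_clusters:
  assumes s: "sorted_wrt (\<ge>) xs" and p: "\<forall>x\<in>set xs. 0 < x"
  shows "last ` good_clusters eps xs =
    {a\<in>{1..length xs}. good_end eps (lam xs) a \<and> 2 < a \<and> two_step eps (lam xs) (a - 2)}"
proof (intro equalityI subsetI)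
  fix a assume "a \<in> last ` good_clusters eps xs"
  then obtain cs where "cs \<in> good_clusters eps xs" "a = last cs" by blast
  then obtain b m where m: "1 \<le> m" and a: "a = b + 2 * m" and R: "two_step_run eps (lam xs) b a"
    and S: "good_start (lam xs) b" and od: "odd (gap (lam xs) (a + 1))"
    unfolding good_cluster_iff[OF s p] by (auto simp: last_progression)
  have "a - 2 = b + 2 * (m - 1)" using m a by simp
  then have "two_step eps (lam xs) (a - 2)"
    using R a unfolding two_step_run_def by (auto dest: spec[of _ "m - 1"])
  moreover have "1 \<le> b" "a + 1 \<le> length xs"
    using run_ends_two_step[OF R] two_step_ge1 two_step_less_length[OF partition_fun_lam[OF s]] by blast+
  ultimately show "a \<in> {a\<in>{1..length xs}. good_end eps (lam xs) a \<and> 2 < a \<and> two_step eps (lam xs) (a - 2)}"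
    using run_left_good[OF R S] od m a by (simp add: good_end_def)
next
  fix a assume "a \<in> {a\<in>{1..length xs}. good_end eps (lam xs) a \<and> 2 < a \<and> two_step eps (lam xs) (a - 2)}"
  then have G': "good_end eps (lam xs) a" and a2: "2 < a" and D2: "two_step eps (lam xs) (a - 2)" by auto
  obtain b where R: "two_step_run eps (lam xs) b a" and S: "good_start (lam xs) b"
    using G' left_good_run_start unfolding good_end_def by blast
  obtain m where a: "a = b + 2 * m" using R unfolding two_step_run_def by blast
  have "even (gap (lam xs) (a - 1))"
    using even_gap_before_two_step[OF D2] run_ends_two_step[OF R] by simp
  then have "m \<noteq> 0" using S a a2 by (cases m) (auto simp: good_start_def)
  moreover have "odd (gap (lam xs) (b + 2 * m + 1))" using G' a by (simp add: good_end_def)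
  ultimately have "progression b m \<in> good_clusters eps xs"
    unfolding good_cluster_iff[OF s p] using R S a by (intro exI[where x=b] exI[where x=m]) simp
  then show "a \<in> last ` good_clusters eps xs" using a by (metis image_eqI last_progression)
qed

lemma card_good_clusters:
  assumes s: "sorted_wrt (\<ge>) xs" and p: "\<forall>x\<in>set xs. 0 < x"
  shows "card (good_clusters eps xs) =
    card {a\<in>{1..length xs}. good_end eps (lam xs) a \<and> 2 < a \<and> two_step eps (lam xs) (a - 2)}"
  using card_image[OF inj_on_last_good_clusters[OF s p]] last_good_clusters[OF s p] by simp

lemma good_end_isolated_iff:
  "good_end e L a \<and> \<not> (2 < a \<and> two_step e L (a - 2)) \<longleftrightarrow>
    two_step e L a \<and> good_start L a \<and> odd (gap L (a + 1))"
proof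
  assume "two_step e L a \<and> good_start L a \<and> odd (gap L (a + 1))"
  moreover have "\<not> (2 < a \<and> two_step e L (a - 2))"
  proof
    assume a: "2 < a \<and> two_step e L (a - 2)"
    then have "even (gap L (a - 1))" using even_gap_before_two_step calculation by blast
    then show False using calculation a by (simp add: good_start_def)
  qed
  ultimately show "good_end e L a \<and> \<not> (2 < a \<and> two_step e L (a - 2))"
    using run_left_good[OF run_refl] by (auto simp: good_end_def)
next
  assume G: "good_end e L a \<and> \<not> (2 < a \<and> two_step e L (a - 2))"
  then have "two_step e L a" using good_end_two_step by blast
  moreover have "\<not> left_good e L (a - 2)"
    using G left_good_two_step two_step_ge1 by fastforce
  moreover have "a \<noteq> 1 \<Longrightarrow> 2 \<le> a" using two_step_ge1[OF calculation(1)] by linarith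
  ultimately show "two_step e L a \<and> good_start L a \<and> odd (gap L (a + 1))"
    using G left_good_iff[of a e L] by (auto simp: good_end_def good_start_def)
qed

lemma two_steps_minus_bad:
  assumes s: "sorted_wrt (\<ge>) xs" and p: "\<forall>x\<in>set xs. 0 < x"
  shows "two_steps eps xs - bad_two_steps eps xs = (\<lambda>i. (i, i+1)) `
    {a\<in>{1..length xs}. good_end eps (lam xs) a \<and> \<not> (2 < a \<and> two_step eps (lam xs) (a - 2))}"
proof -
  let ?L = "lam xs"
  have P: "partition_fun ?L (length xs)" using partition_fun_lam[OF s] .
  have not_bad: "\<not> ((i > 1 \<and> even (int (?L (i-1)) - int (?L i))) \<or> even (int (?L (i+1)) - int (?L (i+2))))
      \<longleftrightarrow> good_start ?L i \<and> odd (gap ?L (i+1))" if "two_step eps ?L i" for i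
    using two_step_ge1[OF that] by (auto simp: good_start_def gap_def)
  have range: "i \<in> {1..length xs}" if "two_step eps ?L i" for i
    using two_step_ge1[OF that] two_step_less_length[OF P that] by simp
  show ?thesis
    unfolding bad_two_steps_def two_steps_eq[OF p] good_end_isolated_iff
    using not_bad range by auto
qed

lemma z_fun_eq_z_sum:
  assumes s: "sorted_wrt (\<ge>) xs" and p: "\<forall>x\<in>set xs. 0 < x"
  shows "z_fun eps xs = z_sum eps (lam xs) (length xs)"
proof -
  let ?L = "lam xs" and ?n = "length xs"
  let ?G1 = "{a\<in>{1..?n}. good_end eps ?L a \<and> \<not> (2 < a \<and> two_step eps ?L (a - 2))}"
  let ?G2 = "{a\<in>{1..?n}. good_end eps ?L a \<and> 2 < a \<and> two_step eps ?L (a - 2)}"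
  have fin: "finite (two_steps eps xs)" unfolding two_steps_def by simp
  have sub: "bad_two_steps eps xs \<subseteq> two_steps eps xs" by (auto simp: bad_two_steps_def)
  have "int (card (two_steps eps xs)) - int (card (bad_two_steps eps xs))
      = int (card (two_steps eps xs - bad_two_steps eps xs))"
    using card_Diff_subset[OF finite_subset[OF sub fin] sub] card_mono[OF fin sub] by simp
  also have "\<dots> = int (card ?G1)"
    unfolding two_steps_minus_bad[OF s p] by (rule arg_cong[where f = int], rule card_image) (simp add: inj_on_def)
  finally have steps: "int (card (two_steps eps xs)) - int (card (bad_two_steps eps xs)) = int (card ?G1)" .
  have "card ?G1 + card ?G2 = card {a\<in>{1..?n}. good_end eps ?L a}"
    by (subst card_Un_disjoint[symmetric]) (auto intro: arg_cong[where f = card])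
  then have "int (card ?G1) + int (card (good_clusters eps xs)) = (\<Sum>a=1..?n. if good_end eps ?L a then 1 else 0)"
    using card_good_clusters[OF s p] sum_indicator_card[of "{1..?n}"] by simp
  then show ?thesis
    using steps unfolding z_fun_def z_sum_def s_fun_def gap_def by linarith
qed

lemma z_fun_ks_step_case1:
  assumes s: "sorted_wrt (\<ge>) xs" and C: "case1 xs i"
  shows "z_fun eps (ks_step eps xs i) = z_sum eps (step1_fun (lam xs) i) (length xs)"
proof -
  let ?ys = "ks_step eps xs i"
  have K: "lam ?ys = step1_fun (lam xs) i" "sorted_wrt (\<ge>) ?ys" "\<forall>x\<in>set ?ys. 0 < x" "length ?ys \<le> length xs"
    using ks_step_case1[OF s C, of eps] by blast+
  have "z_fun eps ?ys = z_sum eps (lam ?ys) (length ?ys)" using z_fun_eq_z_sum[OF K(2,3)] .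
  also have "\<dots> = z_sum eps (lam ?ys) (length xs)"
    using z_sum_extend[OF partition_fun_lam[OF K(2)] K(4)] by simp
  also have "\<dots> = z_sum eps (step1_fun (lam xs) i) (length xs)" unfolding K(1) ..
  finally show ?thesis .
qed

lemma z_fun_ks_step_case2:
  assumes s: "sorted_wrt (\<ge>) xs" and p: "\<forall>x\<in>set xs. 0 < x" and C: "case2 eps xs i" "\<not> case1 xs i"
  shows "z_fun eps (ks_step eps xs i) = z_sum eps (step2_fun (lam xs) i) (length xs)"
proof -
  let ?ys = "ks_step eps xs i"
  have K: "lam ?ys = step2_fun (lam xs) i" "sorted_wrt (\<ge>) ?ys" "\<forall>x\<in>set ?ys. 0 < x" "length ?ys \<le> length xs"
    using ks_step_case2[OF s p C] by blast+
  have "z_fun eps ?ys = z_sum eps (lam ?ys) (length ?ys)" using z_fun_eq_z_sum[OF K(2,3)] .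
  also have "\<dots> = z_sum eps (lam ?ys) (length xs)"
    using z_sum_extend[OF partition_fun_lam[OF K(2)] K(4)] by simp
  also have "\<dots> = z_sum eps (step2_fun (lam xs) i) (length xs)" unfolding K(1) ..
  finally show ?thesis .
qed

lemma ks_step_partition:
  assumes s: "sorted_wrt (\<ge>) xs" and p: "\<forall>x\<in>set xs. 0 < x" and "case1 xs i \<or> case2 eps xs i"
  shows "sorted_wrt (\<ge>) (ks_step eps xs i) \<and> (\<forall>x\<in>set (ks_step eps xs i). 0 < x)"
  using assms(3) ks_step_case1[OF s, of i eps] ks_step_case2[OF s p, of eps i] by blast

lemma z_fun_ks_step_less:
  assumes s: "sorted_wrt (\<ge>) xs" and p: "\<forall>x\<in>set xs. 0 < x" and "case1 xs i \<or> case2 eps xs i"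
  shows "z_fun eps (ks_step eps xs i) + 1 \<le> z_fun eps xs"
proof -
  have P: "partition_fun (lam xs) (length xs)" using partition_fun_lam[OF s] .
  show ?thesis
  proof (cases "case1 xs i")
    case True
    then show ?thesis using z_fun_ks_step_case1[OF s True] z_sum_step1_le[OF P, of i eps]
      case1_iff z_fun_eq_z_sum[OF s p] by simp
  next
    case False
    with assms(3) have C: "case2 eps xs i" by simp
    then show ?thesis using z_fun_ks_step_case2[OF s p C False] z_sum_step2_le[OF P, of eps i]
      case2_iff[OF p] z_fun_eq_z_sum[OF s p] by simp
  qed
qed

lemma z_fun_ks_step_exact:
  assumes s: "sorted_wrt (\<ge>) xs" and p: "\<forall>x\<in>set xs. 0 < x" and "0 < z_fun eps xs"
  obtains i where "case1 xs i \<or> case2 eps xs i" and "z_fun eps (ks_step eps xs i) + 1 = z_fun eps xs"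
proof -
  have P: "partition_fun (lam xs) (length xs)" using partition_fun_lam[OF s] .
  have z: "z_fun eps xs = z_sum eps (lam xs) (length xs)" using z_fun_eq_z_sum[OF s p] .
  show ?thesis
  proof (rule z_sum_exact_step[OF P, of eps])
    fix i assume "case1_fun (lam xs) i" and "z_sum eps (step1_fun (lam xs) i) (length xs) + 1 = z_sum eps (lam xs) (length xs)"
    then show ?thesis using that[of i] z z_fun_ks_step_case1[OF s] case1_iff by simp
  next
    fix i assume "case2_fun eps (lam xs) i" "\<not> case1_fun (lam xs) i"
      and "z_sum eps (step2_fun (lam xs) i) (length xs) + 1 = z_sum eps (lam xs) (length xs)"
    then show ?thesis using that[of i] z z_fun_ks_step_case2[OF s p] case1_iff case2_iff[OF p] by simp
  qed (use assms(3) z in simp)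
qed

lemma admissible_length_le_z_fun:
  "sorted_wrt (\<ge>) xs \<Longrightarrow> \<forall>x\<in>set xs. 0 < x \<Longrightarrow> admissible eps xs is \<Longrightarrow> int (length is) \<le> z_fun eps xs"
proof (induction "is" arbitrary: xs)
  case Nil
  then show ?case using z_fun_eq_z_sum[OF Nil.prems(1,2)] z_sum_nonneg[OF partition_fun_lam[OF Nil.prems(1)]] by simp
next
  case (Cons i "is")
  then have C: "case1 xs i \<or> case2 eps xs i" and "admissible eps (ks_step eps xs i) is" by auto
  then have "int (length is) \<le> z_fun eps (ks_step eps xs i)"
    using Cons.IH ks_step_partition[OF Cons.prems(1,2) C] by blast
  then show ?case using z_fun_ks_step_less[OF Cons.prems(1,2) C] by simp
qed

lemma admissible_of_length_z_fun:
  "sorted_wrt (\<ge>) xs \<Longrightarrow> \<forall>x\<in>set xs. 0 < x \<Longrightarrow> z_fun eps xs = int k \<Longrightarrow>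
    \<exists>is. admissible eps xs is \<and> length is = k"
proof (induction k arbitrary: xs)
  case 0
  then show ?case by (intro exI[of _ "[]"]) simp
next
  case (Suc k)
  then obtain i where C: "case1 xs i \<or> case2 eps xs i" and "z_fun eps (ks_step eps xs i) + 1 = z_fun eps xs"
    using z_fun_ks_step_exact[OF Suc.prems(1,2)] by (metis of_nat_0_less_iff zero_less_Suc)
  then have "z_fun eps (ks_step eps xs i) = int k" using Suc.prems(3) by simp
  then obtain js where "admissible eps (ks_step eps xs i) js" "length js = k"
    using Suc.IH ks_step_partition[OF Suc.prems(1,2) C] by blast
  then show ?case using C by (intro exI[of _ "i # js"]) simp
qed

theorem mainTheorem10:
  fixes eps :: int and N :: nat and xs :: "nat list"
  assumes "eps = 1 \<or> eps = -1"
    and "xs \<in> P_eps eps N"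
  shows "(\<exists>is. admissible eps xs is \<and> int (length is) = z_fun eps xs) \<and>
         (\<forall>is. admissible eps xs is \<longrightarrow> int (length is) \<le> z_fun eps xs)"
proof
  have s: "sorted_wrt (\<ge>) xs" and p: "\<forall>x\<in>set xs. 0 < x" using assms(2) unfolding P_eps_def by auto
  have "0 \<le> z_fun eps xs" using z_fun_eq_z_sum[OF s p] z_sum_nonneg[OF partition_fun_lam[OF s]] by simp
  then obtain k where k: "z_fun eps xs = int k" using nonneg_int_cases by blast
  then show "\<exists>is. admissible eps xs is \<and> int (length is) = z_fun eps xs"
    using admissible_of_length_z_fun[OF s p k] by auto
  show "\<forall>is. admissible eps xs is \<longrightarrow> int (length is) \<le> z_fun eps xs"
    using admissible_length_le_z_fun[OF s p] by blast
qed

end
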